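(* Let $\Delta\in\mathcal{H}_{\ge3}$ be a hypergraph on $[d]$ and let $F=F_\sim\wedge F_{\not\sim}$ be a consistent formula on $[d]$. Then there is a unique hypergraph $\Delta_F$ on the vertex set $[d]/F$ that is minimal (with respect to $\le$) among the hypergraphs $\widetilde\Delta$ on $[d]/F$ satisfying: (1) for every $e\in\Delta$ with $|\{\bar i_F: i\in e\}|\ge3$ there is $e'\in\widetilde\Delta$ with $\{\bar i_F:i\in e\}\subseteq e'$; (2) there is no atom $(c_1\not\sim c_2)$ of $F_{\not\sim}$ and no pair of distinct edges $e_1,e_2\in\widetilde\Delta$ with $\{\bar{c_1}_F,\bar{c_2}_F\}\subseteq e_1\cap e_2$. Moreover $\Delta_F=(\Delta_{F_\sim})_{F_{\not\sim}}$.
   Context: A hypergraph on a finite vertex set $V$ is a collection of subsets of $V$ (edges) none properly contained in another; $\Delta_1\le\Delta_2$ means every edge of $\Delta_1$ is contained in some edge of $\Delta_2$; $\mathcal{H}_{\ge3}$ denotes hypergraphs all of whose edges have size $\ge3$. A formula on $[d]$ is a conjunction of atoms $(x\sim y)$ and $(x\not\sim y)$ with $x\neq y\in[d]$; $F_\sim$ is the conjunction of its $\sim$-atoms and $F_{\not\sim}$ that of its $\not\sim$-atoms. The $\sim$-atoms generate an equivalence relation on $[d]$, with set of classes $[d]/F$ and class $\bar i_F$ of $i$; $F$ is consistent if no atom $(i\not\sim j)$ has $\bar i_F=\bar j_F$. $\Delta_{F_\sim}$ is the hypergraph on $[d]/F$ consisting of the inclusion-maximal sets among $\{\bar i_F:i\in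 e\}$, for $e\in\Delta$ with $|\{\bar i_F:i\in e\}|\ge3$. For a hypergraph $\Gamma$ on $[d]/F$ with edges of size $\ge3$, $\Gamma_{F_{\not\sim}}$ denotes the unique minimal (for $\le$) hypergraph $\Gamma'$ on $[d]/F$ with $\Gamma\le\Gamma'$ such that no atom $(c_1\not\sim c_2)$ of $F_{\not\sim}$ and no two distinct edges $e_1,e_2\in\Gamma'$ satisfy $\{\bar{c_1}_F,\bar{c_2}_F\}\subseteq e_1\cap e_2$ (this exists and is unique). *)

theory Defs
  imports Main
begin

definition hypergraph_on :: "'a set \<Rightarrow> 'a set set \<Rightarrow> bool" where
  "hypergraph_on V H \<longleftrightarrow> (\<forall>e\<in>H. e \<subseteq> V) \<and> (\<forall>e1\<in>H. \<forall>e2\<in>H. \<not> e1 \<subset> e2)"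

definition hyp_le :: "'a set set \<Rightarrow> 'a set set \<Rightarrow> bool" where
  "hyp_le H1 H2 \<longleftrightarrow> (\<forall>e\<in>H1. \<exists>e'\<in>H2. e \<subseteq> e')"

definition H_ge3 :: "'a set set \<Rightarrow> bool" where
  "H_ge3 H \<longleftrightarrow> (\<forall>e\<in>H. card e \<ge> 3)"

text \<open>A formula on [d] is given by its set of \<open>\<sim>\<close>-atoms Fs and its set of
  \<open>\<not>\<sim>\<close>-atoms Fn, each atom being a pair (x,y) with x \<noteq> y in [d].\<close>

definition formula_on :: "nat \<Rightarrow> (nat \<times> nat) set \<Rightarrow> (nat \<times> nat) set \<Rightarrow> bool" where
  "formula_on d Fs Fn \<longleftrightarrow>
     (\<forall>(x,y)\<in>Fs \<union> Fn. x \<noteq> y \<and> x \<in> {1..d} \<and> y \<in> {1..d})"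

definition feq :: "nat \<Rightarrow> (nat \<times> nat) set \<Rightarrow> (nat \<times> nat) set" where
  "feq d Fs = (Fs \<union> Fs\<inverse>)\<^sup>* \<inter> ({1..d} \<times> {1..d})"

definition fclasses :: "nat \<Rightarrow> (nat \<times> nat) set \<Rightarrow> nat set set" where
  "fclasses d Fs = {1..d} // feq d Fs"

definition fcl :: "nat \<Rightarrow> (nat \<times> nat) set \<Rightarrow> nat \<Rightarrow> nat set" where
  "fcl d Fs i = feq d Fs `` {i}"

definition consistent :: "nat \<Rightarrow> (nat \<times> nat) set \<Rightarrow> (nat \<times> nat) set \<Rightarrow> bool" where
  "consistent d Fs Fn \<longleftrightarrow> (\<forall>(i,j)\<in>Fn. fcl d Fs i \<noteq> fcl d Fs j)"

definition maxsets :: "'a set set \<Rightarrow> 'a set set" where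
  "maxsets S = {x\<in>S. \<not> (\<exists>y\<in>S. x \<subset> y)}"

definition Delta_Fsim :: "nat \<Rightarrow> (nat \<times> nat) set \<Rightarrow> nat set set \<Rightarrow> nat set set set" where
  "Delta_Fsim d Fs \<Delta> = maxsets {fcl d Fs ` e | e. e \<in> \<Delta> \<and> card (fcl d Fs ` e) \<ge> 3}"

definition nsim_ok :: "nat \<Rightarrow> (nat \<times> nat) set \<Rightarrow> (nat \<times> nat) set \<Rightarrow> nat set set set \<Rightarrow> bool" where
  "nsim_ok d Fs Fn G \<longleftrightarrow>
     \<not> (\<exists>(c1,c2)\<in>Fn. \<exists>e1\<in>G. \<exists>e2\<in>G. e1 \<noteq> e2 \<and> {fcl d Fs c1, fcl d Fs c2} \<subseteq> e1 \<inter> e2)"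

definition Gamma_Fnsim :: "nat \<Rightarrow> (nat \<times> nat) set \<Rightarrow> (nat \<times> nat) set \<Rightarrow> nat set set set \<Rightarrow> nat set set set" where
  "Gamma_Fnsim d Fs Fn \<Gamma> = (THE G. (hypergraph_on (fclasses d Fs) G \<and> hyp_le \<Gamma> G \<and> nsim_ok d Fs Fn G)
      \<and> (\<forall>G'. hypergraph_on (fclasses d Fs) G' \<and> hyp_le \<Gamma> G' \<and> nsim_ok d Fs Fn G' \<and> hyp_le G' G \<longrightarrow> G' = G))"

definition covers_Delta :: "nat \<Rightarrow> (nat \<times> nat) set \<Rightarrow> nat set set \<Rightarrow> nat set set set \<Rightarrow> bool" where
  "covers_Delta d Fs \<Delta> G \<longleftrightarrow>
     (\<forall>e\<in>\<Delta>. card (fcl d Fs ` e) \<ge> 3 \<longrightarrow> (\<exists>e'\<in>G. fcl d Fs ` e \<subseteq> e'))"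

definition admissible :: "nat \<Rightarrow> (nat \<times> nat) set \<Rightarrow> (nat \<times> nat) set \<Rightarrow> nat set set \<Rightarrow> nat set set set \<Rightarrow> bool" where
  "admissible d Fs Fn \<Delta> G \<longleftrightarrow>
     hypergraph_on (fclasses d Fs) G \<and> covers_Delta d Fs \<Delta> G \<and> nsim_ok d Fs Fn G"

end

theory Submission
  imports Defs
begin

text \<open>Condition (1) says exactly that \<open>\<Delta>\<^sub>F\<^sub>\<sim> \<le> \<Delta>'\<close>, so the admissible hypergraphs are those
  above \<open>\<Delta>\<^sub>F\<^sub>\<sim>\<close> satisfying condition (2). Among them there is a least one for \<open>\<le>\<close>: starting
  from \<open>\<Delta>\<^sub>F\<^sub>\<sim>\<close>, repeatedly merge two distinct edges that both contain the classes of a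
  \<open>\<not>\<sim>\<close>-atom. Every hypergraph satisfying (2) that lies above the current one has a single edge
  containing both merged edges, so it still lies above the result; merging lowers the number of
  edges, hence the process stops, and keeping the maximal edges yields a hypergraph. Since \<open>\<le>\<close>
  is antisymmetric on hypergraphs, a least admissible hypergraph is the unique minimal one, and it
  is also the unique minimal hypergraph defining \<open>(\<Delta>\<^sub>F\<^sub>\<sim>)\<^sub>F\<^sub>\<not>\<^sub>\<sim>\<close>.\<close>

lemma hyp_le_refl: "hyp_le H H"
  unfolding hyp_le_def by blast

lemma hyp_le_trans: "hyp_le A B \<Longrightarrow> hyp_le B C \<Longrightarrow> hyp_le A C"
  unfolding hyp_le_def by (meson subset_trans)

lemma hyp_le_antisym:
  assumes "hypergraph_on V A" "hypergraph_on V B" "hyp_le A B" "hyp_le B A"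
  shows "A = B"
proof -
  have "X \<subseteq> Y" if X: "hypergraph_on V X" and "hyp_le X Y" "hyp_le Y X" for X Y :: "'a set set"
  proof
    fix e assume e: "e \<in> X"
    then obtain e' where e': "e' \<in> Y" "e \<subseteq> e'"
      using \<open>hyp_le X Y\<close> unfolding hyp_le_def by blast
    then obtain e'' where e'': "e'' \<in> X" "e' \<subseteq> e''"
      using \<open>hyp_le Y X\<close> unfolding hyp_le_def by blast
    have "\<not> e \<subset> e''"
      using X e e''(1) unfolding hypergraph_on_def by blast
    with e'(2) e''(2) have "e = e'" by blast
    with e'(1) show "e \<in> Y" by simp
  qed
  then show ?thesis using assms by blast
qed

lemma maxsets_subset: "maxsets S \<subseteq> S"
  unfolding maxsets_def by blast

lemma maxsets_above:
  assumes "finite S" "x \<in> S"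
  shows "\<exists>y\<in>maxsets S. x \<subseteq> y"
proof -
  obtain m where "m \<in> S" "x \<subseteq> m" "\<forall>b\<in>S. m \<subseteq> b \<longrightarrow> m = b"
    using finite_has_maximal2[OF assms] by blast
  then show ?thesis unfolding maxsets_def by blast
qed

lemma hyp_le_maxsets_iff:
  assumes "finite S"
  shows "hyp_le (maxsets S) G \<longleftrightarrow> hyp_le S G"
  using maxsets_above[OF assms] maxsets_subset unfolding hyp_le_def by (meson subset_iff subset_trans)

lemma hyp_le_maxsets: "finite S \<Longrightarrow> hyp_le S (maxsets S)"
  using hyp_le_maxsets_iff hyp_le_refl by blast

lemma hypergraph_on_maxsets: "\<forall>e\<in>S. e \<subseteq> V \<Longrightarrow> hypergraph_on V (maxsets S)"
  unfolding hypergraph_on_def maxsets_def by auto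

definition merge_edges :: "'a set set \<Rightarrow> 'a set \<Rightarrow> 'a set \<Rightarrow> 'a set set" where
  "merge_edges H e1 e2 = insert (e1 \<union> e2) (H - {e1, e2})"

lemma finite_merge_edges: "finite H \<Longrightarrow> finite (merge_edges H e1 e2)"
  unfolding merge_edges_def by simp

lemma Union_merge_edges: "e1 \<in> H \<Longrightarrow> e2 \<in> H \<Longrightarrow> \<Union> (merge_edges H e1 e2) = \<Union> H"
  unfolding merge_edges_def by auto

lemma card_merge_edges_less:
  assumes "finite H" "e1 \<in> H" "e2 \<in> H" "e1 \<noteq> e2"
  shows "card (merge_edges H e1 e2) < card H"
proof -
  have "card (H - {e1, e2}) = card H - 2"
    using assms by (simp add: card_Diff_subset)
  moreover have "card H \<ge> 2"
    using assms card_mono[of H "{e1, e2}"] by simp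
  moreover have "card (merge_edges H e1 e2) \<le> Suc (card (H - {e1, e2}))"
    unfolding merge_edges_def using assms by (simp add: card_insert_if)
  ultimately show ?thesis by linarith
qed

lemma hyp_le_merge_edges: "hyp_le H (merge_edges H e1 e2)"
  unfolding hyp_le_def merge_edges_def by auto

lemma merge_edges_hyp_le:
  assumes "hyp_le H G" "g \<in> G" "e1 \<union> e2 \<subseteq> g"
  shows "hyp_le (merge_edges H e1 e2) G"
  using assms unfolding hyp_le_def merge_edges_def by auto

lemma nsim_ok_subset:
  assumes "nsim_ok d Fs Fn G" "G' \<subseteq> G"
  shows "nsim_ok d Fs Fn G'"
  using assms unfolding nsim_ok_def by (simp add: case_prod_beta) (meson subsetD)

lemma nsim_ok_common_edge:
  assumes "nsim_ok d Fs Fn G" "(c1, c2) \<in> Fn" "g1 \<in> G" "g2 \<in> G"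
    and "{fcl d Fs c1, fcl d Fs c2} \<subseteq> g1 \<inter> g2"
  shows "g1 = g2"
  using assms unfolding nsim_ok_def by fastforce

lemma not_nsim_okE:
  assumes "\<not> nsim_ok d Fs Fn G"
  obtains c1 c2 e1 e2 where "(c1, c2) \<in> Fn" "e1 \<in> G" "e2 \<in> G" "e1 \<noteq> e2"
    "{fcl d Fs c1, fcl d Fs c2} \<subseteq> e1 \<inter> e2"
  using assms unfolding nsim_ok_def by auto

lemma least_nsim_ok_above_finite:
  assumes "finite H"
  shows "\<exists>H'. finite H' \<and> \<Union> H' = \<Union> H \<and> hyp_le H H' \<and> nsim_ok d Fs Fn H'
           \<and> (\<forall>G. hyp_le H G \<and> nsim_ok d Fs Fn G \<longrightarrow> hyp_le H' G)"
  using assms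
proof (induction "card H" arbitrary: H rule: less_induct)
  case less
  show ?case
  proof (cases "nsim_ok d Fs Fn H")
    case True
    then show ?thesis using less.prems hyp_le_refl by blast
  next
    case False
    then obtain c1 c2 e1 e2 where violation: "(c1, c2) \<in> Fn" "e1 \<in> H" "e2 \<in> H" "e1 \<noteq> e2"
      "{fcl d Fs c1, fcl d Fs c2} \<subseteq> e1 \<inter> e2"
      by (rule not_nsim_okE)
    let ?M = "merge_edges H e1 e2"
    obtain H' where H': "finite H'" "\<Union> H' = \<Union> ?M" "hyp_le ?M H'" "nsim_ok d Fs Fn H'"
      "\<forall>G. hyp_le ?M G \<and> nsim_ok d Fs Fn G \<longrightarrow> hyp_le H' G"
      using less.hyps[OF card_merge_edges_less[OF less.prems violation(2-4)]]
        finite_merge_edges[OF less.prems] by blast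
    have least: "hyp_le ?M G" if G: "hyp_le H G" "nsim_ok d Fs Fn G" for G
    proof -
      obtain g1 g2 where g1: "g1 \<in> G" "e1 \<subseteq> g1" and g2: "g2 \<in> G" "e2 \<subseteq> g2"
        using G(1) violation(2,3) unfolding hyp_le_def by meson
      have "g1 = g2"
        by (rule nsim_ok_common_edge[OF G(2) violation(1) g1(1) g2(1)])
          (use violation(5) g1(2) g2(2) in blast)
      then have "e1 \<union> e2 \<subseteq> g1" using g1(2) g2(2) by simp
      then show ?thesis by (rule merge_edges_hyp_le[OF G(1) g1(1)])
    qed
    have "hyp_le H H'" using hyp_le_merge_edges H'(3) by (rule hyp_le_trans)
    moreover have "\<Union> H' = \<Union> H" using H'(2) Union_merge_edges[OF violation(2,3)] by simp
    ultimately show ?thesis using H'(1,4,5) least hyp_le_trans by meson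
  qed
qed

lemma least_nsim_ok_hypergraph_above:
  assumes "finite H" "\<forall>e\<in>H. e \<subseteq> V"
  obtains H' where "hypergraph_on V H'" "hyp_le H H'" "nsim_ok d Fs Fn H'"
    "\<And>G. hyp_le H G \<Longrightarrow> nsim_ok d Fs Fn G \<Longrightarrow> hyp_le H' G"
proof -
  obtain H' where H': "finite H'" "\<Union> H' = \<Union> H" "hyp_le H H'" "nsim_ok d Fs Fn H'"
    "\<forall>G. hyp_le H G \<and> nsim_ok d Fs Fn G \<longrightarrow> hyp_le H' G"
    using least_nsim_ok_above_finite[OF assms(1), where d=d and Fs=Fs and Fn=Fn] by blast
  have "\<Union> H' \<subseteq> V" using H'(2) assms(2) by auto
  show ?thesis
  proof (rule that)
    show "hypergraph_on V (maxsets H')"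
      using \<open>\<Union> H' \<subseteq> V\<close> by (intro hypergraph_on_maxsets) auto
    show "hyp_le H (maxsets H')"
      using H'(3) hyp_le_maxsets[OF H'(1)] by (rule hyp_le_trans)
    show "nsim_ok d Fs Fn (maxsets H')"
      using H'(4) maxsets_subset by (rule nsim_ok_subset)
    show "hyp_le (maxsets H') G" if "hyp_le H G" "nsim_ok d Fs Fn G" for G
      unfolding hyp_le_maxsets_iff[OF H'(1)] using H'(5) that by simp
  qed
qed

lemma minimal_iff_eq_least:
  assumes "\<And>G. Q G \<Longrightarrow> hypergraph_on V G"
    and "Q H" "\<And>G. Q G \<Longrightarrow> hyp_le H G"
  shows "(Q DF \<and> (\<forall>G. Q G \<and> hyp_le G DF \<longrightarrow> G = DF)) \<longleftrightarrow> DF = H"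
  using assms hyp_le_antisym by metis

lemma fclasses_eq_image: "fclasses d Fs = fcl d Fs ` {1..d}"
  unfolding fclasses_def fcl_def quotient_def by (simp add: UNION_singleton_eq_range)

lemma Delta_Fsim_edges_subset:
  assumes "hypergraph_on {1..d} \<Delta>"
  shows "\<forall>e\<in>Delta_Fsim d Fs \<Delta>. e \<subseteq> fclasses d Fs"
proof
  fix x assume "x \<in> Delta_Fsim d Fs \<Delta>"
  then obtain e where "x = fcl d Fs ` e" "e \<in> \<Delta>"
    using maxsets_subset unfolding Delta_Fsim_def by blast
  moreover have "e \<subseteq> {1..d}" if "e \<in> \<Delta>" for e
    using assms that unfolding hypergraph_on_def by blast
  ultimately show "x \<subseteq> fclasses d Fs"
    unfolding fclasses_eq_image by (simp add: image_mono)
qed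

lemma finite_Delta_Fsim:
  assumes "hypergraph_on {1..d} \<Delta>"
  shows "finite (Delta_Fsim d Fs \<Delta>)"
proof -
  have "finite (fclasses d Fs)" unfolding fclasses_eq_image by simp
  then show ?thesis
    using Delta_Fsim_edges_subset[OF assms] by (meson Pow_iff finite_Pow_iff finite_subset subsetI)
qed

lemma covers_Delta_iff_hyp_le:
  assumes "hypergraph_on {1..d} \<Delta>"
  shows "covers_Delta d Fs \<Delta> G \<longleftrightarrow> hyp_le (Delta_Fsim d Fs \<Delta>) G"
proof -
  define S where "S = {fcl d Fs ` e | e. e \<in> \<Delta> \<and> card (fcl d Fs ` e) \<ge> 3}"
  have "finite S"
  proof (rule finite_subset)
    show "S \<subseteq> Pow (fcl d Fs ` {1..d})"
      using assms unfolding S_def hypergraph_on_def by blast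
  qed simp
  moreover have "covers_Delta d Fs \<Delta> G \<longleftrightarrow> hyp_le S G"
    unfolding covers_Delta_def hyp_le_def S_def by blast
  ultimately show ?thesis
    unfolding Delta_Fsim_def S_def[symmetric] using hyp_le_maxsets_iff by blast
qed

theorem mainTheorem5:
  fixes d :: nat and \<Delta> :: "nat set set" and Fs Fn :: "(nat \<times> nat) set"
  assumes "hypergraph_on {1..d} \<Delta>" and "H_ge3 \<Delta>"
    and "formula_on d Fs Fn" and "consistent d Fs Fn"
  shows "(\<exists>!DF. admissible d Fs Fn \<Delta> DF
                \<and> (\<forall>G. admissible d Fs Fn \<Delta> G \<and> hyp_le G DF \<longrightarrow> G = DF))
         \<and> (\<forall>DF. admissible d Fs Fn \<Delta> DF
                \<and> (\<forall>G. admissible d Fs Fn \<Delta> G \<and> hyp_le G DF \<longrightarrow> G = DF)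
           \<longrightarrow> DF = Gamma_Fnsim d Fs Fn (Delta_Fsim d Fs \<Delta>))"
proof -
  let ?\<Gamma> = "Delta_Fsim d Fs \<Delta>"
  let ?Q = "\<lambda>G. hypergraph_on (fclasses d Fs) G \<and> hyp_le ?\<Gamma> G \<and> nsim_ok d Fs Fn G"
  have admissible_iff: "admissible d Fs Fn \<Delta> G \<longleftrightarrow> ?Q G" for G
    unfolding admissible_def covers_Delta_iff_hyp_le[OF assms(1)] by blast
  obtain H where "?Q H" and least: "\<And>G. ?Q G \<Longrightarrow> hyp_le H G"
    using least_nsim_ok_hypergraph_above[OF finite_Delta_Fsim Delta_Fsim_edges_subset, OF assms(1) assms(1)]
    by metis
  then have minimal_iff: "(?Q DF \<and> (\<forall>G. ?Q G \<and> hyp_le G DF \<longrightarrow> G = DF)) \<longleftrightarrow> DF = H" for DF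
    by (intro minimal_iff_eq_least[of ?Q "fclasses d Fs"]) blast+
  then have "Gamma_Fnsim d Fs Fn ?\<Gamma> = H"
    unfolding Gamma_Fnsim_def by (simp add: conj_assoc)
  then show ?thesis
    unfolding admissible_iff minimal_iff by blast
qed

end
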